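(* Let $F=(\langle a_\alpha,b_\alpha,F_\alpha\rangle)_{\alpha\in A}$ be an ordinal sum of t-subnorms which is a t-norm, $f:[0,1]\to[0,1]$ strictly increasing with $B_A^f\ne\emptyset$, $\{f_\beta\}_{\beta\in B_A^f}$ the decomposition set of $f$, $T(x,y)=f^{(-1)}(F(f(x),f(y)))$, and for $\beta\in B_A^f$ and $x,y\in[s_\beta,t_\beta]$, $T^\beta(x,y)=f_\beta^{(-1)}(F^\beta(f_\beta(x),f_\beta(y)))$ and $\underline T^\beta(x,y)=f_\beta^{(-1)}(\underline F^\beta(f_\beta(x),f_\beta(y)))$, where $\underline F^\beta(x,y)=F^\beta(x,y)$ for $(x,y)\in[a_\beta,b_\beta)^2$ and $\underline F^\beta(x,y)=\min\{x,y\}$ for $(x,y)\in[a_\beta,b_\beta]^2\setminus[a_\beta,b_\beta)^2$. Let $\beta\in B_A^f$. (i) If $F_\beta$ is a t-norm, then $T(x,y)=T^\beta(x,y)$ for all $x,y\in[s_\beta,t_\beta]$ with $(x,y)\ne(s_\beta,s_\beta)$. (ii) If $F_\beta$ is a proper t-subnorm, then: (a) if $f(t_\beta)\le b_\beta$, $T(x,y)=T^\beta(x,y)$ for all $x,y\in[s_\beta,t_\beta]$ with $(x,y)\ne(s_\beta,s_\beta)$; (b) if $f(t_\beta)>b_\beta$, $T(x,y)=\underline T^\beta(x,y)$ for all $x,y\in[s_\beta,t_\beta]$ with $(x,y)\ne(s_\beta,s_\beta)$.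
   Context: A t-norm is a commutative, associative map $[0,1]^2\to[0,1]$, non-decreasing in each variable, with neutral element $1$; a t-subnorm is commutative, associative, non-decreasing with $G(x,y)\le\min\{x,y\}$; proper means not a t-norm. For a non-decreasing $g:[p,q]\to[u,v]$, $g^{(-1)}(y)=\sup\{x\in[p,q]:g(x)<y\}$ with $\sup\emptyset=p$. Ordinal sum of t-subnorms: $A\ne\emptyset$ totally ordered, $(a_\alpha,b_\alpha)$ pairwise disjoint non-empty open subintervals of $[0,1]$, $F_\alpha$ t-subnorms, and $F(x,y)=a_\alpha+(b_\alpha-a_\alpha)F_\alpha(\frac{x-a_\alpha}{b_\alpha-a_\alpha},\frac{y-a_\alpha}{b_\alpha-a_\alpha})$ if $(x,y)\in(a_\alpha,b_\alpha]^2$, $\min\{x,y\}$ otherwise; $F$ is assumed to be a t-norm. $F^\alpha(x,y)=a_\alpha+(b_\alpha-a_\alpha)F_\alpha(\frac{x-a_\alpha}{b_\alpha-a_\alpha},\frac{y-a_\alpha}{b_\alpha-a_\alpha})$ for $x,y\in[a_\alpha,b_\alpha]$. $s_\alpha=\inf\{x\in[0,1]:f(x)\ge a_\alpha\}$, $t_\alpha=\sup\{x\in[0,1]:f(x)\le b_\alpha\}$ ($\inf\emptyset=1,\sup\emptyset=0$); $B_A^f=\{\beta\in A:s_\beta<t_\beta\}$. Decomposition set: $f_\beta:[s_\beta,t_\beta]\to[a_\beta,b_\beta]$ with $f_\beta=f$ on $(s_\beta,t_\beta)$, $f_\beta(s_\beta)=f(s_\beta)$ if $f(s_\beta)\ge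 a_\beta$ else $a_\beta$, $f_\beta(t_\beta)=f(t_\beta)$ if $f(t_\beta)\le b_\beta$ else $b_\beta$. *)

theory Defs
  imports Complex_Main
begin


text \<open>t-norm on [0,1] (functions real => real => real, only values on [0,1]^2 matter).\<close>
definition tnorm :: "(real \<Rightarrow> real \<Rightarrow> real) \<Rightarrow> bool" where
  "tnorm G \<longleftrightarrow>
     (\<forall>x\<in>{0..1}. \<forall>y\<in>{0..1}. G x y \<in> {0..1}) \<and>
     (\<forall>x\<in>{0..1}. \<forall>y\<in>{0..1}. G x y = G y x) \<and>
     (\<forall>x\<in>{0..1}. \<forall>y\<in>{0..1}. \<forall>z\<in>{0..1}. G (G x y) z = G x (G y z)) \<and>
     (\<forall>x\<in>{0..1}. \<forall>x'\<in>{0..1}. \<forall>y\<in>{0..1}. x \<le> x' \<longrightarrow> G x y \<le> G x' y) \<and>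
     (\<forall>x\<in>{0..1}. G x 1 = x)"

definition tsubnorm :: "(real \<Rightarrow> real \<Rightarrow> real) \<Rightarrow> bool" where
  "tsubnorm G \<longleftrightarrow>
     (\<forall>x\<in>{0..1}. \<forall>y\<in>{0..1}. G x y \<in> {0..1}) \<and>
     (\<forall>x\<in>{0..1}. \<forall>y\<in>{0..1}. G x y = G y x) \<and>
     (\<forall>x\<in>{0..1}. \<forall>y\<in>{0..1}. \<forall>z\<in>{0..1}. G (G x y) z = G x (G y z)) \<and>
     (\<forall>x\<in>{0..1}. \<forall>x'\<in>{0..1}. \<forall>y\<in>{0..1}. x \<le> x' \<longrightarrow> G x y \<le> G x' y) \<and>
     (\<forall>x\<in>{0..1}. \<forall>y\<in>{0..1}. G x y \<le> min x y)"

definition proper_tsubnorm :: "(real \<Rightarrow> real \<Rightarrow> real) \<Rightarrow> bool" where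
  "proper_tsubnorm G \<longleftrightarrow> tsubnorm G \<and> \<not> tnorm G"

definition summand :: "('i \<Rightarrow> real) \<Rightarrow> ('i \<Rightarrow> real) \<Rightarrow> ('i \<Rightarrow> real \<Rightarrow> real \<Rightarrow> real)
    \<Rightarrow> 'i \<Rightarrow> real \<Rightarrow> real \<Rightarrow> real" where
  "summand a b Fs \<alpha> x y =
     a \<alpha> + (b \<alpha> - a \<alpha>) * Fs \<alpha> ((x - a \<alpha>) / (b \<alpha> - a \<alpha>)) ((y - a \<alpha>) / (b \<alpha> - a \<alpha>))"

definition summand_low :: "('i \<Rightarrow> real) \<Rightarrow> ('i \<Rightarrow> real) \<Rightarrow> ('i \<Rightarrow> real \<Rightarrow> real \<Rightarrow> real)
    \<Rightarrow> 'i \<Rightarrow> real \<Rightarrow> real \<Rightarrow> real" where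
  "summand_low a b Fs \<alpha> x y =
     (if x < b \<alpha> \<and> y < b \<alpha> then summand a b Fs \<alpha> x y else min x y)"

definition ordinal_sum :: "'i set \<Rightarrow> ('i \<Rightarrow> real) \<Rightarrow> ('i \<Rightarrow> real) \<Rightarrow> ('i \<Rightarrow> real \<Rightarrow> real \<Rightarrow> real)
    \<Rightarrow> real \<Rightarrow> real \<Rightarrow> real" where
  "ordinal_sum A a b Fs x y =
     (if \<exists>\<alpha>\<in>A. x \<in> {a \<alpha><..b \<alpha>} \<and> y \<in> {a \<alpha><..b \<alpha>}
      then summand a b Fs (SOME \<alpha>. \<alpha> \<in> A \<and> x \<in> {a \<alpha><..b \<alpha>} \<and> y \<in> {a \<alpha><..b \<alpha>}) x y
      else min x y)"

definition pinv :: "real \<Rightarrow> real \<Rightarrow> (real \<Rightarrow> real) \<Rightarrow> real \<Rightarrow> real" where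
  "pinv p q g y = (if {x \<in> {p..q}. g x < y} = {} then p else Sup {x \<in> {p..q}. g x < y})"

definition s_pt :: "(real \<Rightarrow> real) \<Rightarrow> ('i \<Rightarrow> real) \<Rightarrow> 'i \<Rightarrow> real" where
  "s_pt f a \<beta> = (if {x \<in> {0..1}. a \<beta> \<le> f x} = {} then 1 else Inf {x \<in> {0..1}. a \<beta> \<le> f x})"

definition t_pt :: "(real \<Rightarrow> real) \<Rightarrow> ('i \<Rightarrow> real) \<Rightarrow> 'i \<Rightarrow> real" where
  "t_pt f b \<beta> = (if {x \<in> {0..1}. f x \<le> b \<beta>} = {} then 0 else Sup {x \<in> {0..1}. f x \<le> b \<beta>})"

definition B_set :: "'i set \<Rightarrow> (real \<Rightarrow> real) \<Rightarrow> ('i \<Rightarrow> real) \<Rightarrow> ('i \<Rightarrow> real) \<Rightarrow> 'i set" where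
  "B_set A f a b = {\<beta> \<in> A. s_pt f a \<beta> < t_pt f b \<beta>}"

definition decomp :: "(real \<Rightarrow> real) \<Rightarrow> ('i \<Rightarrow> real) \<Rightarrow> ('i \<Rightarrow> real) \<Rightarrow> 'i \<Rightarrow> real \<Rightarrow> real" where
  "decomp f a b \<beta> x =
     (if x = s_pt f a \<beta> then (if a \<beta> \<le> f (s_pt f a \<beta>) then f (s_pt f a \<beta>) else a \<beta>)
      else if x = t_pt f b \<beta> then (if f (t_pt f b \<beta>) \<le> b \<beta> then f (t_pt f b \<beta>) else b \<beta>)
      else f x)"

definition Tgen :: "'i set \<Rightarrow> ('i \<Rightarrow> real) \<Rightarrow> ('i \<Rightarrow> real) \<Rightarrow> ('i \<Rightarrow> real \<Rightarrow> real \<Rightarrow> real)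
    \<Rightarrow> (real \<Rightarrow> real) \<Rightarrow> real \<Rightarrow> real \<Rightarrow> real" where
  "Tgen A a b Fs f x y = pinv 0 1 f (ordinal_sum A a b Fs (f x) (f y))"

definition Tbeta :: "('i \<Rightarrow> real) \<Rightarrow> ('i \<Rightarrow> real) \<Rightarrow> ('i \<Rightarrow> real \<Rightarrow> real \<Rightarrow> real)
    \<Rightarrow> (real \<Rightarrow> real) \<Rightarrow> 'i \<Rightarrow> real \<Rightarrow> real \<Rightarrow> real" where
  "Tbeta a b Fs f \<beta> x y =
     pinv (s_pt f a \<beta>) (t_pt f b \<beta>) (decomp f a b \<beta>)
       (summand a b Fs \<beta> (decomp f a b \<beta> x) (decomp f a b \<beta> y))"

definition Tbeta_low :: "('i \<Rightarrow> real) \<Rightarrow> ('i \<Rightarrow> real) \<Rightarrow> ('i \<Rightarrow> real \<Rightarrow> real \<Rightarrow> real)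
    \<Rightarrow> (real \<Rightarrow> real) \<Rightarrow> 'i \<Rightarrow> real \<Rightarrow> real \<Rightarrow> real" where
  "Tbeta_low a b Fs f \<beta> x y =
     pinv (s_pt f a \<beta>) (t_pt f b \<beta>) (decomp f a b \<beta>)
       (summand_low a b Fs \<beta> (decomp f a b \<beta> x) (decomp f a b \<beta> y))"

end

theory Submission
  imports Defs
begin

text \<open>Both sides are pseudo-inverses, i.e. suprema of sublevel sets:
  \<open>T(x, y) = sup {z \<in> [0,1]. f z < F(f x, f y)}\<close> and
  \<open>T\<^sup>\<beta>(x, y) = sup {z \<in> [s\<^sub>\<beta>, t\<^sub>\<beta>]. f\<^sub>\<beta> z < F\<^sup>\<beta>(f\<^sub>\<beta> x, f\<^sub>\<beta> y)}\<close>.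
  Below \<open>s\<^sub>\<beta>\<close> the values of \<open>f\<close> lie below \<open>a\<^sub>\<beta>\<close>, hence below both thresholds as long as these are at least \<open>a\<^sub>\<beta>\<close>; on
  \<open>(s\<^sub>\<beta>, t\<^sub>\<beta>)\<close> the maps \<open>f\<close> and \<open>f\<^sub>\<beta>\<close> agree, and \<open>F = F\<^sup>\<beta>\<close> on \<open>(a\<^sub>\<beta>, b\<^sub>\<beta>]\<^sup>2\<close> because
  the summand intervals are disjoint; above \<open>t\<^sub>\<beta>\<close> the values of \<open>f\<close> exceed both thresholds.
  So the two sublevel sets differ only inside \<open>[0, s\<^sub>\<beta>]\<close> and have the same supremum.
  What remains are the ends of the summand, where \<open>f\<^sub>\<beta>\<close> is clamped to \<open>a\<^sub>\<beta>\<close> or \<open>b\<^sub>\<beta>\<close>.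
  At the bottom, \<open>F\<close> is the minimum across \<open>a\<^sub>\<beta>\<close> and \<open>a\<^sub>\<beta>\<close> is absorbing for \<open>F\<^sup>\<beta>\<close>. At the top,
  if \<open>f t\<^sub>\<beta> > b\<^sub>\<beta>\<close> then \<open>F(u, f t\<^sub>\<beta>) = u\<close>, which matches \<open>F\<^sup>\<beta>(u, b\<^sub>\<beta>)\<close> only when
  \<open>F\<^sub>\<beta>\<close> has neutral element 1; for a proper t-subnorm one has to use the lower variant,
  which takes \<open>min\<close> on the top edge.\<close>

section \<open>Pseudo-inverses\<close>

lemma Sup_default_eq_if_sandwiched:
  fixes S S' :: "real set"
  assumes "0 \<le> s" "bdd_above S" "S' \<subseteq> {s..}"
    and "{0..<s} \<subseteq> S" "S \<subseteq> {0..s} \<union> S'" "S' \<subseteq> S"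
  shows "(if S = {} then 0 else Sup S) = (if S' = {} then s else Sup S')"
proof (cases "S' = {}")
  case True
  then have S_le_s: "S \<subseteq> {0..s}" using assms(5) by blast
  show ?thesis
  proof (cases "S = {}")
    case True
    then have "s = 0" using assms(1,4) by fastforce
    with True \<open>S' = {}\<close> show ?thesis by simp
  next
    case False
    have "Sup S \<le> s" using False S_le_s by (intro cSup_least) auto
    moreover have "s \<le> Sup S"
    proof (cases "s = 0")
      case True
      obtain z where "z \<in> S" using False by blast
      then show ?thesis using True S_le_s assms(2) cSup_upper[of z S] by auto
    next
      case False
      then have "Sup {0..<s} = s" using assms(1) by (simp add: cSup_atLeastLessThan)
      moreover have "Sup {0..<s} \<le> Sup S"
        using False assms(1,2,4) by (intro cSup_subset_mono) auto
      ultimately show ?thesis by simp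
    qed
    ultimately show ?thesis using False \<open>S' = {}\<close> by simp
  qed
next
  case False
  have "S \<noteq> {}" using False assms(6) by blast
  have bdd': "bdd_above S'" using assms(2,6) by (rule bdd_above_mono)
  obtain z' where "z' \<in> S'" using False by blast
  then have s_le: "s \<le> Sup S'" using assms(3) bdd' cSup_upper[of z' S'] by auto
  have "Sup S' \<le> Sup S" using False assms(2,6) by (rule cSup_subset_mono)
  moreover have "Sup S \<le> Sup S'"
  proof (rule cSup_least[OF \<open>S \<noteq> {}\<close>])
    fix z assume "z \<in> S"
    then have "z \<le> s \<or> z \<in> S'" using assms(5) by auto
    then show "z \<le> Sup S'" using s_le bdd' cSup_upper by fastforce
  qed
  ultimately show ?thesis using False \<open>S \<noteq> {}\<close> by simp
qed

lemma pinv_eq_if_sublevel_sets_agree: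
  assumes "0 \<le> s" "s \<le> t" "t \<le> 1"
    and "\<And>z. 0 \<le> z \<Longrightarrow> z \<le> 1 \<Longrightarrow> z \<noteq> s \<Longrightarrow>
           f z < w \<longleftrightarrow> z < s \<or> (s < z \<and> z \<le> t \<and> g z < w')"
    and "g s < w' \<Longrightarrow> f s < w"
  shows "pinv 0 1 f w = pinv s t g w'"
  unfolding pinv_def
proof (rule Sup_default_eq_if_sandwiched)
  show "bdd_above {x \<in> {0..1}. f x < w}" by (rule bdd_aboveI[of _ 1]) auto
  show "{0..<s} \<subseteq> {x \<in> {0..1}. f x < w}"
  proof
    fix z assume "z \<in> {0..<s}"
    then show "z \<in> {x \<in> {0..1}. f x < w}" using assms(1-3) assms(4)[of z] by auto
  qed
  show "{x \<in> {0..1}. f x < w} \<subseteq> {0..s} \<union> {x \<in> {s..t}. g x < w'}"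
  proof
    fix z assume z: "z \<in> {x \<in> {0..1}. f x < w}"
    show "z \<in> {0..s} \<union> {x \<in> {s..t}. g x < w'}"
    proof (cases "z \<le> s")
      case False
      then show ?thesis using z assms(4)[of z] by auto
    qed (use z in simp)
  qed
  show "{x \<in> {s..t}. g x < w'} \<subseteq> {x \<in> {0..1}. f x < w}"
  proof
    fix z assume z: "z \<in> {x \<in> {s..t}. g x < w'}"
    show "z \<in> {x \<in> {0..1}. f x < w}"
    proof (cases "z = s")
      case False
      then show ?thesis using z assms(1-3) assms(4)[of z] by auto
    qed (use z assms(1-3,5) in simp)
  qed
qed (use assms(1) in auto)

section \<open>The end points \<open>s\<^sub>\<beta>\<close> and \<open>t\<^sub>\<beta>\<close>\<close>

lemma s_pt_le_one: "s_pt f a \<beta> \<le> 1"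
proof -
  have "Inf {x \<in> {0..1}. a \<beta> \<le> f x} \<le> 1" if "x \<in> {x \<in> {0..1}. a \<beta> \<le> f x}" for x
    using that by (intro cInf_lower2[of x]) (auto intro: bdd_belowI[of _ 0])
  then show ?thesis unfolding s_pt_def by auto
qed

lemma less_a_below_s_pt:
  assumes "0 \<le> z" "z < s_pt f a \<beta>"
  shows "f z < a \<beta>"
proof -
  define S where "S = {x \<in> {0..1}. a \<beta> \<le> f x}"
  have "z \<notin> S"
  proof (cases "S = {}")
    case False
    have "bdd_below S" unfolding S_def by (rule bdd_belowI[of _ 0]) auto
    moreover have "z < Inf S" using assms False unfolding s_pt_def S_def[symmetric] by simp
    ultimately show ?thesis using cInf_lower[of z S] by force
  qed simp
  moreover have "z \<le> 1" using assms(2) s_pt_le_one[of f a \<beta>] by simp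
  ultimately show ?thesis using assms(1) unfolding S_def by auto
qed

lemma a_less_above_s_pt:
  assumes "strict_mono_on {0..1} f" "s_pt f a \<beta> < z" "z \<le> 1"
  shows "a \<beta> < f z"
proof -
  define S where "S = {x \<in> {0..1}. a \<beta> \<le> f x}"
  have "S \<noteq> {}"
  proof
    assume "S = {}"
    then show False using assms(2,3) unfolding s_pt_def S_def[symmetric] by simp
  qed
  moreover have "bdd_below S" unfolding S_def by (rule bdd_belowI[of _ 0]) auto
  moreover have "Inf S < z" using assms(2) \<open>S \<noteq> {}\<close> unfolding s_pt_def S_def[symmetric] by simp
  ultimately obtain x where x: "x \<in> S" "x < z" using cInf_less_iff by blast
  then have "f x < f z" using assms(1,3) unfolding S_def by (auto intro: strict_mono_onD)
  then show ?thesis using x(1) unfolding S_def by simp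
qed

lemma less_b_below_t_pt:
  assumes "strict_mono_on {0..1} f" "0 \<le> z" "z < t_pt f b \<beta>"
  shows "f z < b \<beta>"
proof -
  define T where "T = {x \<in> {0..1}. f x \<le> b \<beta>}"
  have "T \<noteq> {}"
  proof
    assume "T = {}"
    then show False using assms(2,3) unfolding t_pt_def T_def[symmetric] by simp
  qed
  moreover have "bdd_above T" unfolding T_def by (rule bdd_aboveI[of _ 1]) auto
  moreover have "z < Sup T" using assms(3) \<open>T \<noteq> {}\<close> unfolding t_pt_def T_def[symmetric] by simp
  ultimately obtain x where x: "x \<in> T" "z < x" using less_cSup_iff by blast
  then have "f z < f x" using assms(1,2) unfolding T_def by (auto intro: strict_mono_onD)
  then show ?thesis using x(1) unfolding T_def by simp
qed

lemma s_pt_nonneg: "0 \<le> s_pt f a \<beta>"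
  unfolding s_pt_def by (auto intro: cInf_greatest)

lemma t_pt_le_one: "t_pt f b \<beta> \<le> 1"
  unfolding t_pt_def by (auto intro: cSup_least)

section \<open>T-norms, t-subnorms and rescaled summands\<close>

lemma tnorm_le_left:
  assumes "tnorm G" "x \<in> {0..1}" "y \<in> {0..1}"
  shows "G x y \<le> x"
proof -
  have "G x y = G y x" using assms unfolding tnorm_def by blast
  also have "\<dots> \<le> G 1 x"
    using assms unfolding tnorm_def by (meson atLeastAtMost_iff order_refl zero_le_one)
  also have "\<dots> = G x 1" using assms unfolding tnorm_def by auto
  also have "\<dots> = x" using assms unfolding tnorm_def by blast
  finally show ?thesis .
qed

lemma tnorm_le_right:
  assumes "tnorm G" "x \<in> {0..1}" "y \<in> {0..1}"
  shows "G x y \<le> y"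
proof -
  have "G x y = G y x" using assms unfolding tnorm_def by blast
  then show ?thesis using tnorm_le_left[OF assms(1,3,2)] by simp
qed

lemma tsubnorm_range: "tsubnorm G \<Longrightarrow> x \<in> {0..1} \<Longrightarrow> y \<in> {0..1} \<Longrightarrow> G x y \<in> {0..1}"
  unfolding tsubnorm_def by blast

lemma tsubnorm_commute: "tsubnorm G \<Longrightarrow> x \<in> {0..1} \<Longrightarrow> y \<in> {0..1} \<Longrightarrow> G x y = G y x"
  unfolding tsubnorm_def by blast

lemma tsubnorm_le_min: "tsubnorm G \<Longrightarrow> x \<in> {0..1} \<Longrightarrow> y \<in> {0..1} \<Longrightarrow> G x y \<le> min x y"
  unfolding tsubnorm_def by blast

lemma rescaled_in_unit_interval:
  fixes p q u :: real
  assumes "p < q" "u \<in> {p..q}"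
  shows "(u - p) / (q - p) \<in> {0..1}"
  using assms by (simp add: pos_divide_le_eq)

lemma summand_ge_lower:
  assumes "tsubnorm (Fs \<alpha>)" "a \<alpha> < b \<alpha>"
    and "u \<in> {a \<alpha>..b \<alpha>}" "v \<in> {a \<alpha>..b \<alpha>}"
  shows "a \<alpha> \<le> summand a b Fs \<alpha> u v"
proof -
  have "0 \<le> Fs \<alpha> ((u - a \<alpha>) / (b \<alpha> - a \<alpha>)) ((v - a \<alpha>) / (b \<alpha> - a \<alpha>))"
    using tsubnorm_range[OF assms(1) rescaled_in_unit_interval rescaled_in_unit_interval] assms(2-4)
    by simp
  then show ?thesis unfolding summand_def using assms(2) by simp
qed

lemma summand_bottom_left:
  assumes "tsubnorm (Fs \<alpha>)" "a \<alpha> < b \<alpha>" "v \<in> {a \<alpha>..b \<alpha>}"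
  shows "summand a b Fs \<alpha> (a \<alpha>) v = a \<alpha>"
proof -
  let ?v = "(v - a \<alpha>) / (b \<alpha> - a \<alpha>)"
  have "?v \<in> {0..1}" using assms(2,3) by (rule rescaled_in_unit_interval)
  then have "Fs \<alpha> 0 ?v = 0"
    using tsubnorm_range[OF assms(1)] tsubnorm_le_min[OF assms(1)] by force
  then show ?thesis unfolding summand_def by simp
qed

lemma summand_commute:
  assumes "tsubnorm (Fs \<alpha>)" "a \<alpha> < b \<alpha>" "u \<in> {a \<alpha>..b \<alpha>}" "v \<in> {a \<alpha>..b \<alpha>}"
  shows "summand a b Fs \<alpha> u v = summand a b Fs \<alpha> v u"
  unfolding summand_def
  using tsubnorm_commute[OF assms(1) rescaled_in_unit_interval rescaled_in_unit_interval] assms(2-4)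
  by simp

lemma summand_top_right:
  assumes "tnorm (Fs \<alpha>)" "a \<alpha> < b \<alpha>" "u \<in> {a \<alpha>..b \<alpha>}"
  shows "summand a b Fs \<alpha> u (b \<alpha>) = u"
proof -
  have "Fs \<alpha> ((u - a \<alpha>) / (b \<alpha> - a \<alpha>)) 1 = (u - a \<alpha>) / (b \<alpha> - a \<alpha>)"
    using assms rescaled_in_unit_interval unfolding tnorm_def by blast
  then show ?thesis unfolding summand_def using assms(2) by simp
qed

lemma summand_low_bottom_left:
  assumes "tsubnorm (Fs \<alpha>)" "a \<alpha> < b \<alpha>" "v \<in> {a \<alpha>..b \<alpha>}"
  shows "summand_low a b Fs \<alpha> (a \<alpha>) v = a \<alpha>"
  using summand_bottom_left[of Fs \<alpha> a b v] assms unfolding summand_low_def by auto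

lemma summand_low_commute:
  assumes "tsubnorm (Fs \<alpha>)" "a \<alpha> < b \<alpha>" "u \<in> {a \<alpha>..b \<alpha>}" "v \<in> {a \<alpha>..b \<alpha>}"
  shows "summand_low a b Fs \<alpha> u v = summand_low a b Fs \<alpha> v u"
  using summand_commute[of Fs \<alpha> a b u v] assms unfolding summand_low_def by (auto simp: min.commute)

lemma summand_low_top_right: "u \<le> b \<alpha> \<Longrightarrow> summand_low a b Fs \<alpha> u (b \<alpha>) = u"
  unfolding summand_low_def by simp

section \<open>Ordinal sums\<close>

locale ordinal_sum_of_tsubnorms =
  fixes A :: "'i set" and a b :: "'i \<Rightarrow> real" and Fs :: "'i \<Rightarrow> real \<Rightarrow> real \<Rightarrow> real"
  assumes summand_bounds: "\<alpha> \<in> A \<Longrightarrow> 0 \<le> a \<alpha> \<and> a \<alpha> < b \<alpha> \<and> b \<alpha> \<le> 1"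
    and summands_disjoint:
      "\<alpha> \<in> A \<Longrightarrow> \<gamma> \<in> A \<Longrightarrow> \<alpha> \<noteq> \<gamma> \<Longrightarrow> {a \<alpha><..<b \<alpha>} \<inter> {a \<gamma><..<b \<gamma>} = {}"
    and tsubnorm_summands: "\<alpha> \<in> A \<Longrightarrow> tsubnorm (Fs \<alpha>)"
begin

abbreviation F :: "real \<Rightarrow> real \<Rightarrow> real" where
  "F \<equiv> ordinal_sum A a b Fs"

lemma summand_intervals_separated:
  assumes "\<alpha> \<in> A" "\<gamma> \<in> A" "\<alpha> \<noteq> \<gamma>"
  shows "b \<alpha> \<le> a \<gamma> \<or> b \<gamma> \<le> a \<alpha>"
proof (rule ccontr)
  assume "\<not> ?thesis"
  then have "(max (a \<alpha>) (a \<gamma>) + min (b \<alpha>) (b \<gamma>)) / 2 \<in> {a \<alpha><..<b \<alpha>} \<inter> {a \<gamma><..<b \<gamma>}"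
    using summand_bounds[OF assms(1)] summand_bounds[OF assms(2)] by auto
  then show False using summands_disjoint[OF assms] by blast
qed

lemma ordinal_sum_on_summand:
  assumes "\<beta> \<in> A" "p \<in> {a \<beta><..b \<beta>}" "q \<in> {a \<beta><..b \<beta>}"
  shows "F p q = summand a b Fs \<beta> p q"
proof -
  let ?P = "\<lambda>\<alpha>. \<alpha> \<in> A \<and> p \<in> {a \<alpha><..b \<alpha>} \<and> q \<in> {a \<alpha><..b \<alpha>}"
  have "?P (SOME \<alpha>. ?P \<alpha>)" using assms by (intro someI[of ?P \<beta>]) auto
  then have "(SOME \<alpha>. ?P \<alpha>) = \<beta>"
    using summand_intervals_separated[of "SOME \<alpha>. ?P \<alpha>" \<beta>] assms by force
  then show ?thesis using assms unfolding ordinal_sum_def by auto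
qed

lemma ordinal_sum_outside_summands:
  assumes "\<And>\<alpha>. \<alpha> \<in> A \<Longrightarrow> p \<in> {a \<alpha><..b \<alpha>} \<Longrightarrow> q \<notin> {a \<alpha><..b \<alpha>}"
  shows "F p q = min p q"
  using assms unfolding ordinal_sum_def by auto

lemma ordinal_sum_across_lower_end:
  assumes "\<beta> \<in> A" "p \<le> a \<beta>" "a \<beta> < q"
  shows "F p q = min p q"
proof (rule ordinal_sum_outside_summands)
  fix \<alpha> assume "\<alpha> \<in> A" "p \<in> {a \<alpha><..b \<alpha>}"
  then show "q \<notin> {a \<alpha><..b \<alpha>}"
    using summand_intervals_separated[of \<alpha> \<beta>] summand_bounds assms by force
qed

lemma ordinal_sum_across_upper_end:
  assumes "\<beta> \<in> A" "p < b \<beta>" "b \<beta> < q"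
  shows "F p q = min p q"
proof (rule ordinal_sum_outside_summands)
  fix \<alpha> assume "\<alpha> \<in> A" "p \<in> {a \<alpha><..b \<alpha>}"
  then show "q \<notin> {a \<alpha><..b \<alpha>}"
    using summand_intervals_separated[of \<alpha> \<beta>] summand_bounds assms by force
qed

lemma ordinal_sum_diagonal_above_summand:
  assumes "\<beta> \<in> A" "b \<beta> < q"
  shows "b \<beta> \<le> F q q"
proof (cases "\<exists>\<alpha>\<in>A. q \<in> {a \<alpha><..b \<alpha>}")
  case True
  then obtain \<alpha> where \<alpha>: "\<alpha> \<in> A" "q \<in> {a \<alpha><..b \<alpha>}" by blast
  then have "b \<beta> \<le> a \<alpha>"
    using summand_intervals_separated[of \<alpha> \<beta>] summand_bounds assms by force
  also have "a \<alpha> \<le> summand a b Fs \<alpha> q q"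
    using \<alpha> summand_bounds[of \<alpha>] by (intro summand_ge_lower tsubnorm_summands) auto
  also have "\<dots> = F q q" using \<alpha> by (simp add: ordinal_sum_on_summand)
  finally show ?thesis .
next
  case False
  then have "F q q = q" by (intro ordinal_sum_outside_summands[THEN trans]) auto
  then show ?thesis using assms(2) by simp
qed

end

section \<open>The decomposition of \<open>f\<close> at a summand\<close>

locale decomposition = ordinal_sum_of_tsubnorms +
  fixes f :: "real \<Rightarrow> real" and \<beta>
  assumes tnorm_ordinal_sum: "tnorm (ordinal_sum A a b Fs)"
    and f_strict_mono: "strict_mono_on {0..1} f"
    and f_range: "f ` {0..1} \<subseteq> {0..1}"
    and \<beta>_in_B: "\<beta> \<in> B_set A f a b"
begin

abbreviation "s\<^sub>\<beta> \<equiv> s_pt f a \<beta>"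
abbreviation "t\<^sub>\<beta> \<equiv> t_pt f b \<beta>"
abbreviation "f\<^sub>\<beta> \<equiv> decomp f a b \<beta>"

lemma \<beta>_in_A: "\<beta> \<in> A" and s_less_t: "s\<^sub>\<beta> < t\<^sub>\<beta>"
  using \<beta>_in_B unfolding B_set_def by auto

lemma a_less_b: "a \<beta> < b \<beta>"
  using summand_bounds[OF \<beta>_in_A] by simp

lemma f_less: "0 \<le> x \<Longrightarrow> x < y \<Longrightarrow> y \<le> 1 \<Longrightarrow> f x < f y"
  using f_strict_mono by (auto intro: strict_mono_onD)

lemma f_in_unit_interval: "x \<in> {0..1} \<Longrightarrow> f x \<in> {0..1}"
  using f_range by blast

lemma s_t_bounds: "0 \<le> s\<^sub>\<beta>" "t\<^sub>\<beta> \<le> 1"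
  by (simp_all add: s_pt_nonneg t_pt_le_one)

lemma a_less_f: "s\<^sub>\<beta> < z \<Longrightarrow> z \<le> 1 \<Longrightarrow> a \<beta> < f z"
  by (rule a_less_above_s_pt[OF f_strict_mono])

lemma f_less_b: "0 \<le> z \<Longrightarrow> z < t\<^sub>\<beta> \<Longrightarrow> f z < b \<beta>"
  by (rule less_b_below_t_pt[OF f_strict_mono])

lemma decomp_at_s: "f\<^sub>\<beta> s\<^sub>\<beta> = (if a \<beta> \<le> f s\<^sub>\<beta> then f s\<^sub>\<beta> else a \<beta>)"
  unfolding decomp_def by simp

lemma decomp_at_t: "f\<^sub>\<beta> t\<^sub>\<beta> = (if f t\<^sub>\<beta> \<le> b \<beta> then f t\<^sub>\<beta> else b \<beta>)"
  unfolding decomp_def using s_less_t by simp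

lemma decomp_between: "s\<^sub>\<beta> < z \<Longrightarrow> z < t\<^sub>\<beta> \<Longrightarrow> f\<^sub>\<beta> z = f z"
  unfolding decomp_def by simp

lemma decomp_eq_f: "f z \<in> {a \<beta>..b \<beta>} \<Longrightarrow> f\<^sub>\<beta> z = f z"
  unfolding decomp_def by auto

lemma decomp_range: "z \<in> {s\<^sub>\<beta>..t\<^sub>\<beta>} \<Longrightarrow> f\<^sub>\<beta> z \<in> {a \<beta>..b \<beta>}"
proof -
  assume z: "z \<in> {s\<^sub>\<beta>..t\<^sub>\<beta>}"
  then consider "z = s\<^sub>\<beta>" | "s\<^sub>\<beta> < z" "z < t\<^sub>\<beta>" | "z = t\<^sub>\<beta>" by fastforce
  then show ?thesis
  proof cases
    case 1
    have "f s\<^sub>\<beta> < b \<beta>" using f_less_b s_t_bounds s_less_t by blast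
    then show ?thesis unfolding 1 decomp_at_s using a_less_b by simp
  next
    case 2
    have "a \<beta> < f z" "f z < b \<beta>"
      using a_less_f f_less_b 2 s_t_bounds by (simp_all add: less_imp_le)
    then show ?thesis using decomp_between[OF 2] by simp
  next
    case 3
    have "a \<beta> < f t\<^sub>\<beta>" using a_less_f s_t_bounds s_less_t by blast
    then show ?thesis unfolding 3 decomp_at_t using a_less_b by simp
  qed
qed

lemma pinv_eq_pinv_decomp:
  assumes "a \<beta> \<le> w" "w \<le> f t\<^sub>\<beta>" "b \<beta> < f t\<^sub>\<beta> \<Longrightarrow> w \<le> b \<beta>"
  shows "pinv 0 1 f w = pinv s\<^sub>\<beta> t\<^sub>\<beta> f\<^sub>\<beta> w"
proof (rule pinv_eq_if_sublevel_sets_agree[OF s_t_bounds(1) less_imp_le[OF s_less_t] s_t_bounds(2)])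
  fix z assume z: "0 \<le> z" "z \<le> 1" "z \<noteq> s\<^sub>\<beta>"
  consider "z < s\<^sub>\<beta>" | "s\<^sub>\<beta> < z" "z < t\<^sub>\<beta>" | "z = t\<^sub>\<beta>" | "t\<^sub>\<beta> < z" using z by linarith
  then show "f z < w \<longleftrightarrow> z < s\<^sub>\<beta> \<or> (s\<^sub>\<beta> < z \<and> z \<le> t\<^sub>\<beta> \<and> f\<^sub>\<beta> z < w)"
  proof cases
    case 1
    then show ?thesis using less_a_below_s_pt[of z f a \<beta>] z(1) assms(1) by simp
  next
    case 2
    then show ?thesis by (simp add: decomp_between)
  next
    case 3
    then show ?thesis using decomp_at_t s_less_t assms(2,3) by auto
  next
    case 4
    then show ?thesis using f_less[of t\<^sub>\<beta> z] z s_less_t s_t_bounds assms(2) by simp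
  qed
qed (use decomp_at_s assms(1) in \<open>auto split: if_splits\<close>)

lemma pinv_f_s_eq_pinv_decomp_a:
  assumes "f s\<^sub>\<beta> < a \<beta>"
  shows "pinv 0 1 f (f s\<^sub>\<beta>) = pinv s\<^sub>\<beta> t\<^sub>\<beta> f\<^sub>\<beta> (a \<beta>)"
proof (rule pinv_eq_if_sublevel_sets_agree[OF s_t_bounds(1) less_imp_le[OF s_less_t] s_t_bounds(2)])
  fix z assume z: "0 \<le> z" "z \<le> 1" "z \<noteq> s\<^sub>\<beta>"
  then consider "z < s\<^sub>\<beta>" | "s\<^sub>\<beta> < z" by linarith
  then show "f z < f s\<^sub>\<beta> \<longleftrightarrow> z < s\<^sub>\<beta> \<or> (s\<^sub>\<beta> < z \<and> z \<le> t\<^sub>\<beta> \<and> f\<^sub>\<beta> z < a \<beta>)"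
  proof cases
    case 1
    moreover have "f z < f s\<^sub>\<beta>" using f_less[of z s\<^sub>\<beta>] z(1) 1 s_less_t s_t_bounds by linarith
    ultimately show ?thesis by simp
  next
    case 2
    have "\<not> f\<^sub>\<beta> z < a \<beta>" if "z \<le> t\<^sub>\<beta>" using decomp_range[of z] 2 that by simp
    moreover have "\<not> f z < f s\<^sub>\<beta>" using f_less[of s\<^sub>\<beta> z] z(2) 2 s_t_bounds by simp
    ultimately show ?thesis using 2 by auto
  qed
qed (use decomp_at_s assms in auto)

lemma pinv_eq_pinv_decomp_b:
  assumes "b \<beta> < f t\<^sub>\<beta>" "b \<beta> \<le> w" "w \<le> f t\<^sub>\<beta>"
  shows "pinv 0 1 f w = pinv s\<^sub>\<beta> t\<^sub>\<beta> f\<^sub>\<beta> (b \<beta>)"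
proof (rule pinv_eq_if_sublevel_sets_agree[OF s_t_bounds(1) less_imp_le[OF s_less_t] s_t_bounds(2)])
  fix z assume z: "0 \<le> z" "z \<le> 1" "z \<noteq> s\<^sub>\<beta>"
  consider "z < s\<^sub>\<beta>" | "s\<^sub>\<beta> < z" "z < t\<^sub>\<beta>" | "z = t\<^sub>\<beta>" | "t\<^sub>\<beta> < z" using z by linarith
  then show "f z < w \<longleftrightarrow> z < s\<^sub>\<beta> \<or> (s\<^sub>\<beta> < z \<and> z \<le> t\<^sub>\<beta> \<and> f\<^sub>\<beta> z < b \<beta>)"
  proof cases
    case 1
    then show ?thesis using less_a_below_s_pt[of z f a \<beta>] z(1) a_less_b assms(2) by simp
  next
    case 2
    then show ?thesis using f_less_b[of z] decomp_between z(1) assms(2) by simp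
  next
    case 3
    then show ?thesis using decomp_at_t s_less_t assms by auto
  next
    case 4
    then show ?thesis using f_less[of t\<^sub>\<beta> z] z s_less_t s_t_bounds assms(3) by simp
  qed
qed (use f_less_b[of s\<^sub>\<beta>] s_t_bounds s_less_t assms(2) in auto)

end

section \<open>Comparing \<open>T\<close> with the summand operation\<close>

text \<open>\<open>\<Phi>\<close> stands for \<open>F\<^sup>\<beta>\<close> or its lower variant; the assumptions are all the proof needs
  from it.\<close>

locale summand_variant = decomposition +
  fixes \<Phi> :: "real \<Rightarrow> real \<Rightarrow> real"
  assumes \<Phi>_bottom: "v \<in> {a \<beta>..b \<beta>} \<Longrightarrow> \<Phi> (a \<beta>) v = a \<beta>"
    and \<Phi>_summand: "u \<in> {a \<beta><..b \<beta>} \<Longrightarrow> v \<in> {a \<beta><..b \<beta>} \<Longrightarrow>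
      (u < b \<beta> \<and> v < b \<beta>) \<or> f t\<^sub>\<beta> \<le> b \<beta> \<Longrightarrow> \<Phi> u v = summand a b Fs \<beta> u v"
    and \<Phi>_top: "b \<beta> < f t\<^sub>\<beta> \<Longrightarrow> u \<in> {a \<beta>..b \<beta>} \<Longrightarrow> \<Phi> u (b \<beta>) = u"
    and \<Phi>_commute: "u \<in> {a \<beta>..b \<beta>} \<Longrightarrow> v \<in> {a \<beta>..b \<beta>} \<Longrightarrow> \<Phi> u v = \<Phi> v u"
begin

lemma Tgen_eq_if_f_inside:
  assumes "s\<^sub>\<beta> \<le> x" "x \<le> y" "y \<le> t\<^sub>\<beta>" "f x \<in> {a \<beta><..<b \<beta>}"
  shows "Tgen A a b Fs f x y = pinv s\<^sub>\<beta> t\<^sub>\<beta> f\<^sub>\<beta> (\<Phi> (f\<^sub>\<beta> x) (f\<^sub>\<beta> y))"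
proof -
  have x01: "x \<in> {0..1}" and y01: "y \<in> {0..1}" using assms(1-3) s_t_bounds by auto
  have "f x \<le> f y" using f_less[of x y] assms(2) x01 y01 by (cases "x = y") auto
  then have a_fy: "a \<beta> < f y" using assms(4) by simp
  have fy_ft: "f y \<le> f t\<^sub>\<beta>"
    using f_less[of y t\<^sub>\<beta>] assms(3) y01 s_t_bounds by (cases "y = t\<^sub>\<beta>") auto
  have gx: "f\<^sub>\<beta> x = f x" using assms(4) by (simp add: decomp_eq_f)
  consider "y < t\<^sub>\<beta> \<or> f t\<^sub>\<beta> \<le> b \<beta>" | "y = t\<^sub>\<beta>" "b \<beta> < f t\<^sub>\<beta>"
    using assms(3) by linarith
  then show ?thesis
  proof cases
    case 1
    have fy_b: "f y \<le> b \<beta>" "b \<beta> < f t\<^sub>\<beta> \<Longrightarrow> f y < b \<beta>"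
      using 1 f_less_b[of y] fy_ft y01 by auto
    then have gy: "f\<^sub>\<beta> y = f y" using a_fy by (simp add: decomp_eq_f)
    have F_eq: "F (f x) (f y) = summand a b Fs \<beta> (f x) (f y)"
      using assms(4) a_fy fy_b by (intro ordinal_sum_on_summand \<beta>_in_A) auto
    have \<Phi>_eq: "\<Phi> (f x) (f y) = F (f x) (f y)"
      unfolding F_eq using assms(4) a_fy fy_b 1 f_less_b[of y] y01 by (intro \<Phi>_summand) auto
    have "a \<beta> \<le> F (f x) (f y)"
      unfolding F_eq using assms(4) a_fy fy_b a_less_b
      by (intro summand_ge_lower tsubnorm_summands \<beta>_in_A) auto
    moreover have "F (f x) (f y) \<le> f y"
      using tnorm_le_right[OF tnorm_ordinal_sum] f_in_unit_interval x01 y01 by blast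
    ultimately show ?thesis
      unfolding Tgen_def gx gy \<Phi>_eq using fy_ft fy_b(2)
      by (intro pinv_eq_pinv_decomp) auto
  next
    case 2
    have F_eq: "F (f x) (f y) = f x"
      using 2 assms(4) by (simp add: ordinal_sum_across_upper_end[OF \<beta>_in_A])
    have \<Phi>_eq: "\<Phi> (f x) (f\<^sub>\<beta> y) = f x"
      using 2 assms(4) decomp_at_t by (auto intro: \<Phi>_top)
    show ?thesis
      unfolding Tgen_def gx F_eq \<Phi>_eq using assms(4) \<open>f x \<le> f y\<close> fy_ft
      by (intro pinv_eq_pinv_decomp) auto
  qed
qed

lemma Tgen_eq_at_s:
  assumes "s\<^sub>\<beta> < y" "y \<le> t\<^sub>\<beta>"
  shows "Tgen A a b Fs f s\<^sub>\<beta> y = pinv s\<^sub>\<beta> t\<^sub>\<beta> f\<^sub>\<beta> (\<Phi> (f\<^sub>\<beta> s\<^sub>\<beta>) (f\<^sub>\<beta> y))"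
proof -
  have a_fy: "a \<beta> < f y" using a_less_f assms s_t_bounds by simp
  have gy: "f\<^sub>\<beta> y \<in> {a \<beta>..b \<beta>}" using decomp_range assms by simp
  consider "f s\<^sub>\<beta> < a \<beta>" | "f s\<^sub>\<beta> = a \<beta>" | "a \<beta> < f s\<^sub>\<beta>" by linarith
  then show ?thesis
  proof cases
    case 1
    have "F (f s\<^sub>\<beta>) (f y) = f s\<^sub>\<beta>"
      using 1 a_fy by (simp add: ordinal_sum_across_lower_end[OF \<beta>_in_A])
    moreover have "\<Phi> (f\<^sub>\<beta> s\<^sub>\<beta>) (f\<^sub>\<beta> y) = a \<beta>"
      using 1 gy decomp_at_s \<Phi>_bottom by simp
    ultimately show ?thesis unfolding Tgen_def using pinv_f_s_eq_pinv_decomp_a[OF 1] by simp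
  next
    case 2
    have F_eq: "F (f s\<^sub>\<beta>) (f y) = a \<beta>"
      using 2 a_fy by (simp add: ordinal_sum_across_lower_end[OF \<beta>_in_A])
    have \<Phi>_eq: "\<Phi> (f\<^sub>\<beta> s\<^sub>\<beta>) (f\<^sub>\<beta> y) = a \<beta>"
      using 2 gy decomp_at_s \<Phi>_bottom by simp
    have "a \<beta> < f t\<^sub>\<beta>" using a_less_f s_less_t s_t_bounds by simp
    then show ?thesis
      unfolding Tgen_def F_eq \<Phi>_eq using a_less_b by (intro pinv_eq_pinv_decomp) auto
  next
    case 3
    have "f s\<^sub>\<beta> < b \<beta>" using f_less_b s_less_t s_t_bounds by simp
    then show ?thesis using 3 assms by (intro Tgen_eq_if_f_inside) auto
  qed
qed

lemma Tgen_eq_at_t: "Tgen A a b Fs f t\<^sub>\<beta> t\<^sub>\<beta> = pinv s\<^sub>\<beta> t\<^sub>\<beta> f\<^sub>\<beta> (\<Phi> (f\<^sub>\<beta> t\<^sub>\<beta>) (f\<^sub>\<beta> t\<^sub>\<beta>))"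
proof -
  have t01: "t\<^sub>\<beta> \<in> {0..1}" using s_t_bounds s_less_t by simp
  have a_ft: "a \<beta> < f t\<^sub>\<beta>" using a_less_f s_less_t s_t_bounds by simp
  have F_le: "F (f t\<^sub>\<beta>) (f t\<^sub>\<beta>) \<le> f t\<^sub>\<beta>"
    using tnorm_le_left[OF tnorm_ordinal_sum] f_in_unit_interval t01 by blast
  show ?thesis
  proof (cases "f t\<^sub>\<beta> \<le> b \<beta>")
    case True
    have F_eq: "F (f t\<^sub>\<beta>) (f t\<^sub>\<beta>) = summand a b Fs \<beta> (f t\<^sub>\<beta>) (f t\<^sub>\<beta>)"
      using True a_ft by (intro ordinal_sum_on_summand \<beta>_in_A) auto
    have gt: "f\<^sub>\<beta> t\<^sub>\<beta> = f t\<^sub>\<beta>" using True decomp_at_t by simp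
    have \<Phi>_eq: "\<Phi> (f\<^sub>\<beta> t\<^sub>\<beta>) (f\<^sub>\<beta> t\<^sub>\<beta>) = F (f t\<^sub>\<beta>) (f t\<^sub>\<beta>)"
      unfolding F_eq gt using True a_ft by (intro \<Phi>_summand) auto
    have "a \<beta> \<le> F (f t\<^sub>\<beta>) (f t\<^sub>\<beta>)"
      unfolding F_eq using True a_ft a_less_b
      by (intro summand_ge_lower tsubnorm_summands \<beta>_in_A) auto
    then show ?thesis
      unfolding Tgen_def \<Phi>_eq using F_le True by (intro pinv_eq_pinv_decomp) auto
  next
    case False
    have "\<Phi> (f\<^sub>\<beta> t\<^sub>\<beta>) (f\<^sub>\<beta> t\<^sub>\<beta>) = b \<beta>"
      using False decomp_at_t a_less_b \<Phi>_top by simp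
    moreover have "b \<beta> \<le> F (f t\<^sub>\<beta>) (f t\<^sub>\<beta>)"
      using False by (intro ordinal_sum_diagonal_above_summand \<beta>_in_A) simp
    ultimately show ?thesis
      unfolding Tgen_def using F_le False by (simp add: pinv_eq_pinv_decomp_b)
  qed
qed

lemma Tgen_eq_pinv_decomp:
  assumes "x \<in> {s\<^sub>\<beta>..t\<^sub>\<beta>}" "y \<in> {s\<^sub>\<beta>..t\<^sub>\<beta>}" "(x, y) \<noteq> (s\<^sub>\<beta>, s\<^sub>\<beta>)"
  shows "Tgen A a b Fs f x y = pinv s\<^sub>\<beta> t\<^sub>\<beta> f\<^sub>\<beta> (\<Phi> (f\<^sub>\<beta> x) (f\<^sub>\<beta> y))"
proof -
  have ordered: "Tgen A a b Fs f x y = pinv s\<^sub>\<beta> t\<^sub>\<beta> f\<^sub>\<beta> (\<Phi> (f\<^sub>\<beta> x) (f\<^sub>\<beta> y))"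
    if xy: "s\<^sub>\<beta> \<le> x" "x \<le> y" "y \<le> t\<^sub>\<beta>" "s\<^sub>\<beta> < y" for x y
  proof -
    consider "x = s\<^sub>\<beta>" | "s\<^sub>\<beta> < x" "x < t\<^sub>\<beta>" | "x = t\<^sub>\<beta>" using xy by linarith
    then show ?thesis
    proof cases
      case 1
      then show ?thesis using xy Tgen_eq_at_s by simp
    next
      case 2
      then have "f x \<in> {a \<beta><..<b \<beta>}" using a_less_f f_less_b s_t_bounds by simp
      then show ?thesis using xy by (intro Tgen_eq_if_f_inside) auto
    next
      case 3
      then show ?thesis using xy Tgen_eq_at_t by simp
    qed
  qed
  show ?thesis
  proof (cases "x \<le> y")
    case True
    then show ?thesis using assms by (intro ordered) auto
  next
    case False
    have "Tgen A a b Fs f x y = Tgen A a b Fs f y x"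
      using tnorm_ordinal_sum f_in_unit_interval assms s_t_bounds
      unfolding Tgen_def tnorm_def by (metis atLeastAtMost_iff order_trans)
    also have "\<dots> = pinv s\<^sub>\<beta> t\<^sub>\<beta> f\<^sub>\<beta> (\<Phi> (f\<^sub>\<beta> y) (f\<^sub>\<beta> x))"
      using False assms by (intro ordered) auto
    also have "\<Phi> (f\<^sub>\<beta> y) (f\<^sub>\<beta> x) = \<Phi> (f\<^sub>\<beta> x) (f\<^sub>\<beta> y)"
      using decomp_range assms by (intro \<Phi>_commute) auto
    finally show ?thesis .
  qed
qed

end

context decomposition
begin

lemma Tgen_eq_Tbeta:
  assumes "tnorm (Fs \<beta>) \<or> f t\<^sub>\<beta> \<le> b \<beta>"
    and "x \<in> {s\<^sub>\<beta>..t\<^sub>\<beta>}" "y \<in> {s\<^sub>\<beta>..t\<^sub>\<beta>}" "(x, y) \<noteq> (s\<^sub>\<beta>, s\<^sub>\<beta>)"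
  shows "Tgen A a b Fs f x y = Tbeta a b Fs f \<beta> x y"
proof -
  interpret summand_variant A a b Fs f \<beta> "summand a b Fs \<beta>"
    using summand_bottom_left[of Fs \<beta> a b] summand_top_right[of Fs \<beta> a b]
      summand_commute[of Fs \<beta> a b] tsubnorm_summands[OF \<beta>_in_A] a_less_b assms(1)
    by unfold_locales auto
  show ?thesis unfolding Tbeta_def using assms(2-4) by (rule Tgen_eq_pinv_decomp)
qed

lemma Tgen_eq_Tbeta_low:
  assumes "b \<beta> < f t\<^sub>\<beta>"
    and "x \<in> {s\<^sub>\<beta>..t\<^sub>\<beta>}" "y \<in> {s\<^sub>\<beta>..t\<^sub>\<beta>}" "(x, y) \<noteq> (s\<^sub>\<beta>, s\<^sub>\<beta>)"
  shows "Tgen A a b Fs f x y = Tbeta_low a b Fs f \<beta> x y"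
proof -
  interpret summand_variant A a b Fs f \<beta> "summand_low a b Fs \<beta>"
    using summand_low_bottom_left[of Fs \<beta> a b] summand_low_top_right[of _ b \<beta> a Fs]
      summand_low_commute[of Fs \<beta> a b] tsubnorm_summands[OF \<beta>_in_A] a_less_b assms(1)
    by unfold_locales (auto simp: summand_low_def)
  show ?thesis unfolding Tbeta_low_def using assms(2-4) by (rule Tgen_eq_pinv_decomp)
qed

end

theorem proposition5p2:
  fixes A :: "'i set" and a b :: "'i \<Rightarrow> real" and Fs :: "'i \<Rightarrow> real \<Rightarrow> real \<Rightarrow> real"
    and f :: "real \<Rightarrow> real" and \<beta> :: 'i
  assumes "A \<noteq> {}"
    and "\<forall>\<alpha>\<in>A. 0 \<le> a \<alpha> \<and> a \<alpha> < b \<alpha> \<and> b \<alpha> \<le> 1"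
    and "\<forall>\<alpha>\<in>A. \<forall>\<gamma>\<in>A. \<alpha> \<noteq> \<gamma> \<longrightarrow> {a \<alpha><..<b \<alpha>} \<inter> {a \<gamma><..<b \<gamma>} = {}"
    and "\<forall>\<alpha>\<in>A. tsubnorm (Fs \<alpha>)"
    and "tnorm (ordinal_sum A a b Fs)"
    and "strict_mono_on {0..1} f"
    and "f ` {0..1} \<subseteq> {0..1}"
    and "B_set A f a b \<noteq> {}"
    and "\<beta> \<in> B_set A f a b"
  shows
   "(tnorm (Fs \<beta>) \<longrightarrow>
      (\<forall>x\<in>{s_pt f a \<beta>..t_pt f b \<beta>}. \<forall>y\<in>{s_pt f a \<beta>..t_pt f b \<beta>}.
         (x, y) \<noteq> (s_pt f a \<beta>, s_pt f a \<beta>) \<longrightarrow>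
         Tgen A a b Fs f x y = Tbeta a b Fs f \<beta> x y))
  \<and> (proper_tsubnorm (Fs \<beta>) \<and> f (t_pt f b \<beta>) \<le> b \<beta> \<longrightarrow>
      (\<forall>x\<in>{s_pt f a \<beta>..t_pt f b \<beta>}. \<forall>y\<in>{s_pt f a \<beta>..t_pt f b \<beta>}.
         (x, y) \<noteq> (s_pt f a \<beta>, s_pt f a \<beta>) \<longrightarrow>
         Tgen A a b Fs f x y = Tbeta a b Fs f \<beta> x y))
  \<and> (proper_tsubnorm (Fs \<beta>) \<and> f (t_pt f b \<beta>) > b \<beta> \<longrightarrow>
      (\<forall>x\<in>{s_pt f a \<beta>..t_pt f b \<beta>}. \<forall>y\<in>{s_pt f a \<beta>..t_pt f b \<beta>}.
         (x, y) \<noteq> (s_pt f a \<beta>, s_pt f a \<beta>) \<longrightarrow>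
         Tgen A a b Fs f x y = Tbeta_low a b Fs f \<beta> x y))"
proof -
  interpret decomposition A a b Fs f \<beta>
    using assms(2-7,9) by unfold_locales auto
  show ?thesis using Tgen_eq_Tbeta Tgen_eq_Tbeta_low by blast
qed

end
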